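(* There exists a chain $\mathcal{J}\subset\mathcal{L}$ (totally ordered by inclusion) with $|\mathcal{J}|=\mathfrak{c}$ such that all spaces $(\mathbb{R},\tau)$ with $\tau\in\mathcal{J}$ are completely metrizable and pairwise homeomorphic.
   Context: $\mathfrak{c}=|\mathbb{R}|$. $\eta$ denotes the Euclidean topology on $\mathbb{R}$. $\mathcal{L}$ denotes the family of all Hausdorff topologies $\tau$ on $\mathbb{R}$ with $\tau\subset\eta$. *)

theory Defs
  imports "HOL-Analysis.Analysis" "HOL-Library.Equipollence"
begin

definition coarser :: "'a topology \<Rightarrow> 'a topology \<Rightarrow> bool" where
  "coarser \<tau> \<sigma> \<longleftrightarrow> {S. openin \<tau> S} \<subseteq> {S. openin \<sigma> S}"

definition L_family :: "real topology set" where
  "L_family = {\<tau>. topspace \<tau> = UNIV \<and> Hausdorff_space \<tau> \<and> coarser \<tau> euclidean}"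

end

(*
  For a continuous s that vanishes only at a, let gauge_topology a s be the topology that is
  Euclidean away from a and whose neighbourhoods of a are the Euclidean ones containing a
  sublevel set {s < e}. It is completely metrizable, and a homeomorphism h of the line with
  h 0 = 0 carries gauge_topology 0 (s o h) onto gauge_topology 0 s.

  Take for s a gauge whose sublevel sets are a neighbourhood of 0 together with intervals of
  width about e around all integers beyond 1/e, and pull it back along the homeomorphisms H_c
  solving tan (pi H_c x) = exp (c sqrt (1 + x^2)) tan (pi x), which fix the integers. Around
  the integer n the intervals shrink to width about e exp (-c |n|), so the topologies grow with
  c, strictly because the exponential rates differ. All of them are homeomorphic to the one
  for s itself, and c ranging over (0, pi) gives a chain of continuum many.
*)

theory Submission
  imports Defs
begin

section \<open>Topologies with a gauge at one point\<close>

definition gauge_topology :: "'a::metric_space \<Rightarrow> ('a \<Rightarrow> real) \<Rightarrow> 'a topology" where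
  "gauge_topology a s = topology (\<lambda>U. open U \<and> (a \<in> U \<longrightarrow> (\<exists>e>0. {x. s x < e} \<subseteq> U)))"

lemma istopology_gauge:
  fixes s :: "'a::topological_space \<Rightarrow> real"
  shows "istopology (\<lambda>U. open U \<and> (a \<in> U \<longrightarrow> (\<exists>e>0. {x. s x < e} \<subseteq> U)))"
  unfolding istopology_def
proof (rule conjI; intro allI impI)
  fix S T :: "'a set"
  assume S: "open S \<and> (a \<in> S \<longrightarrow> (\<exists>e>0. {x. s x < e} \<subseteq> S))"
    and T: "open T \<and> (a \<in> T \<longrightarrow> (\<exists>e>0. {x. s x < e} \<subseteq> T))"
  have "\<exists>e>0. {x. s x < e} \<subseteq> S \<inter> T" if a: "a \<in> S \<inter> T"
  proof -
    obtain e1 e2 where "e1 > 0" "{x. s x < e1} \<subseteq> S" "e2 > 0" "{x. s x < e2} \<subseteq> T"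
      using S T a by auto
    then show ?thesis by (intro exI[of _ "min e1 e2"]) auto
  qed
  with S T show "open (S \<inter> T) \<and> (a \<in> S \<inter> T \<longrightarrow> (\<exists>e>0. {x. s x < e} \<subseteq> S \<inter> T))"
    by auto
qed blast

lemma openin_gauge_topology:
  "openin (gauge_topology a s) U \<longleftrightarrow> open U \<and> (a \<in> U \<longrightarrow> (\<exists>e>0. {x. s x < e} \<subseteq> U))"
  unfolding gauge_topology_def topology_inverse'[OF istopology_gauge] ..

lemma topspace_gauge_topology [simp]: "topspace (gauge_topology a s) = UNIV"
  by (metis UNIV_I openin_gauge_topology openin_subset open_UNIV subset_UNIV
      subset_antisym zero_less_one)

lemma coarser_gauge_topology_euclidean: "coarser (gauge_topology a s) euclidean"
  unfolding coarser_def by (auto simp: openin_gauge_topology)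

lemma coarser_gauge_topology:
  assumes "\<And>e. e > 0 \<Longrightarrow> \<exists>e'>0. \<forall>x. s' x < e' \<longrightarrow> s x < e"
  shows "coarser (gauge_topology a s) (gauge_topology a s')"
  unfolding coarser_def
proof (intro subsetI CollectI)
  fix U assume "U \<in> {U. openin (gauge_topology a s) U}"
  then have "open U" and U: "a \<in> U \<Longrightarrow> \<exists>e>0. {x. s x < e} \<subseteq> U"
    by (auto simp: openin_gauge_topology)
  have "\<exists>e'>0. {x. s' x < e'} \<subseteq> U" if "a \<in> U"
  proof -
    obtain e where "e > 0" "{x. s x < e} \<subseteq> U" using U \<open>a \<in> U\<close> by blast
    moreover obtain e' where "e' > 0" "\<forall>x. s' x < e' \<longrightarrow> s x < e" using assms \<open>e > 0\<close> by blast
    ultimately show ?thesis by blast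
  qed
  with \<open>open U\<close> show "openin (gauge_topology a s') U" by (simp add: openin_gauge_topology)
qed

lemma not_coarser_gauge_topology:
  assumes "continuous_on UNIV s" "s a = 0" "e > 0"
    and "\<And>e'. e' > 0 \<Longrightarrow> \<exists>x. s' x < e' \<and> e \<le> s x"
  shows "\<not> coarser (gauge_topology a s) (gauge_topology a s')"
proof
  have "openin (gauge_topology a s) {x. s x < e}"
    using assms(1,3) by (auto simp: openin_gauge_topology open_Collect_less continuous_on_const)
  moreover assume "coarser (gauge_topology a s) (gauge_topology a s')"
  ultimately have "openin (gauge_topology a s') {x. s x < e}"
    unfolding coarser_def by blast
  then obtain e' where "e' > 0" "{x. s' x < e'} \<subseteq> {x. s x < e}"
    using assms(2,3) by (auto simp: openin_gauge_topology)
  with assms(4)[of e'] show False by force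
qed

lemma continuous_map_gauge_topology:
  assumes "continuous_on UNIV h" "h a = b"
  shows "continuous_map (gauge_topology a (s \<circ> h)) (gauge_topology b s) h"
  unfolding continuous_map_def
proof (intro conjI allI impI)
  fix V assume "openin (gauge_topology b s) V"
  then have "open V" and V: "b \<in> V \<Longrightarrow> \<exists>e>0. {y. s y < e} \<subseteq> V"
    by (auto simp: openin_gauge_topology)
  have "open (h -` V)" using open_vimage[OF \<open>open V\<close> assms(1)] .
  moreover have "\<exists>e>0. {x. (s \<circ> h) x < e} \<subseteq> h -` V" if "a \<in> h -` V"
    using V that assms(2) by fastforce
  ultimately show "openin (gauge_topology a (s \<circ> h)) {x \<in> topspace (gauge_topology a (s \<circ> h)). h x \<in> V}"
    by (simp add: openin_gauge_topology vimage_def)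
qed simp

lemma homeomorphic_space_gauge_topology:
  assumes "homeomorphism UNIV UNIV h k" "h a = b"
  shows "gauge_topology a (s \<circ> h) homeomorphic_space gauge_topology b s"
proof -
  have hk: "h (k y) = y" "k (h x) = x" for x y
    using assms(1) by (auto simp: homeomorphism_def)
  have "continuous_map (gauge_topology b (s \<circ> h \<circ> k)) (gauge_topology a (s \<circ> h)) k"
    using assms hk by (intro continuous_map_gauge_topology) (auto simp: homeomorphism_def)
  moreover have "s \<circ> h \<circ> k = s" using hk by auto
  ultimately have "homeomorphic_maps (gauge_topology a (s \<circ> h)) (gauge_topology b s) h k"
    using assms hk continuous_map_gauge_topology[of h a b s]
    by (auto simp: homeomorphic_maps_def homeomorphism_def)
  then show ?thesis unfolding homeomorphic_space_def by blast
qed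

(* The shorter of the direct route from x to y and the route through the zero of s. *)
definition gauge_dist :: "('a::metric_space \<Rightarrow> real) \<Rightarrow> 'a \<Rightarrow> 'a \<Rightarrow> real" where
  "gauge_dist s x y = min (dist x y + \<bar>s x - s y\<bar>) (s x + s y)"

lemma gauge_dist_le: "gauge_dist s x y \<le> dist x y + \<bar>s x - s y\<bar>"
  unfolding gauge_dist_def by simp

lemma gauge_dist_base: "s a = 0 \<Longrightarrow> 0 \<le> s y \<Longrightarrow> gauge_dist s a y = s y"
  unfolding gauge_dist_def by simp

lemma gauge_dist_less_imp_eq:
  "0 \<le> s y \<Longrightarrow> gauge_dist s x y < s x \<Longrightarrow> gauge_dist s x y = dist x y + \<bar>s x - s y\<bar>"
  unfolding gauge_dist_def by auto

lemma gauge_dist_less_near: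
  assumes "isCont s x" "0 < r"
  shows "\<exists>\<delta>>0. \<forall>y. dist x y < \<delta> \<longrightarrow> gauge_dist s x y < r"
proof -
  obtain \<delta> where "\<delta> > 0" and \<delta>: "\<And>y. dist y x < \<delta> \<Longrightarrow> dist (s y) (s x) < r/2"
    using assms unfolding continuous_at_eps_delta by (meson half_gt_zero)
  have "gauge_dist s x y < r" if "dist x y < min \<delta> (r/2)" for y
    using that \<delta>[of y] gauge_dist_le[of s x y] by (simp add: dist_commute dist_real_def)
  then show ?thesis using \<open>\<delta> > 0\<close> \<open>0 < r\<close> by (intro exI[of _ "min \<delta> (r/2)"]) auto
qed

lemma gauge_dist_tendsto_zero:
  assumes "isCont s L" "f \<longlonglongrightarrow> L" "0 < e"
  shows "\<forall>\<^sub>F n in sequentially. gauge_dist s (f n) L < e"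
proof -
  have "(\<lambda>n. dist (f n) L) \<longlonglongrightarrow> 0" using assms(2) tendsto_dist_iff by blast
  moreover have "(\<lambda>n. s (f n)) \<longlonglongrightarrow> s L" using assms(1,2) by (rule isCont_tendsto_compose)
  ultimately have "(\<lambda>n. dist (f n) L + \<bar>s (f n) - s L\<bar>) \<longlonglongrightarrow> 0"
    by (intro tendsto_add_zero tendsto_rabs_zero LIM_zero)
  then show ?thesis
    using assms(3) by (auto intro: eventually_mono[OF order_tendstoD(2)] le_less_trans[OF gauge_dist_le])
qed

lemma Cauchy_if_gauge_dist_Cauchy:
  assumes nonneg: "\<And>x. 0 \<le> s x"
    and Cauchy: "\<And>e. 0 < e \<Longrightarrow> \<exists>N. \<forall>m n. N \<le> m \<longrightarrow> N \<le> n \<longrightarrow> gauge_dist s (f m) (f n) < e"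
    and "0 < c" and bounded_below: "\<And>k. N0 \<le> k \<Longrightarrow> c \<le> s (f k)"
  shows "Cauchy f"
  unfolding Cauchy_def
proof (intro allI impI)
  fix e :: real assume "0 < e"
  then obtain N where N: "\<And>m n. N \<le> m \<Longrightarrow> N \<le> n \<Longrightarrow> gauge_dist s (f m) (f n) < min e c"
    using Cauchy[of "min e c"] \<open>0 < c\<close> by auto
  have "dist (f m) (f n) < e" if "max N N0 \<le> m" "max N N0 \<le> n" for m n
    using N[of m n] bounded_below[of m] that gauge_dist_less_imp_eq[of s "f n" "f m", OF nonneg]
    by auto
  then show "\<exists>M. \<forall>m\<ge>M. \<forall>n\<ge>M. dist (f m) (f n) < e" by blast
qed

lemma Metric_space_gauge_dist:
  assumes s_base: "s a = 0" and s_pos: "\<And>x. x \<noteq> a \<Longrightarrow> 0 < s x"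
  shows "Metric_space UNIV (gauge_dist s)"
proof
  have nonneg: "0 \<le> s x" for x
    using s_base s_pos[of x] by (cases "x = a") auto
  fix x y z
  show "0 \<le> gauge_dist s x y"
    using nonneg[of x] nonneg[of y] unfolding gauge_dist_def by simp
  show "gauge_dist s x y = gauge_dist s y x"
    unfolding gauge_dist_def by (simp add: dist_commute abs_minus_commute add.commute)
  show "gauge_dist s x y = 0 \<longleftrightarrow> x = y"
  proof
    assume "gauge_dist s x y = 0"
    then have "dist x y + \<bar>s x - s y\<bar> = 0 \<or> s x + s y = 0"
      unfolding gauge_dist_def by (metis min_def)
    then show "x = y"
    proof
      assume "dist x y + \<bar>s x - s y\<bar> = 0"
      then show "x = y" by (metis abs_ge_zero add_nonneg_eq_0_iff dist_eq_0_iff zero_le_dist)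
    next
      assume "s x + s y = 0"
      then show "x = y" using nonneg s_pos by (metis add_nonneg_eq_0_iff less_irrefl)
    qed
  qed (simp add: gauge_dist_def nonneg)
  show "gauge_dist s x z \<le> gauge_dist s x y + gauge_dist s y z"
    using nonneg[of x] nonneg[of y] nonneg[of z] dist_triangle[of x z y]
      zero_le_dist[of x y] zero_le_dist[of y z]
    unfolding gauge_dist_def min_def by (smt (verit))
qed

lemma mtopology_gauge_dist:
  assumes cont: "continuous_on UNIV s" and s_base: "s a = 0" and s_pos: "\<And>x. x \<noteq> a \<Longrightarrow> 0 < s x"
  shows "Metric_space.mtopology UNIV (gauge_dist s) = gauge_topology a s"
proof -
  interpret Metric_space UNIV "gauge_dist s"
    using s_base s_pos by (rule Metric_space_gauge_dist)
  have nonneg: "0 \<le> s x" for x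
    using s_base s_pos[of x] by (cases "x = a") auto
  have ball_in_mball: "\<exists>\<delta>>0. ball x \<delta> \<subseteq> mball x r" if r: "r > 0" for x r
  proof -
    have "isCont s x" using cont by (simp add: continuous_on_eq_continuous_at)
    then obtain \<delta> where "\<delta> > 0" "\<forall>y. dist x y < \<delta> \<longrightarrow> gauge_dist s x y < r"
      using gauge_dist_less_near r by blast
    then show ?thesis by auto
  qed
  have mball_in_ball: "mball x (min \<delta> (s x)) \<subseteq> ball x \<delta>" for x \<delta>
    using gauge_dist_less_imp_eq[of s, OF nonneg] by fastforce
  have mball_base: "mball a r = {x. s x < r}" for r
    using gauge_dist_base[of s a, OF s_base nonneg] by auto
  show ?thesis
  proof (rule topology_eq[THEN iffD2], intro allI iffI)
    fix U assume "openin mtopology U"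
    then have U: "\<And>x. x \<in> U \<Longrightarrow> \<exists>r>0. mball x r \<subseteq> U" by (simp add: openin_mtopology)
    have "open U"
      unfolding open_contains_ball by (metis U ball_in_mball order_trans)
    moreover have "\<exists>e>0. {x. s x < e} \<subseteq> U" if "a \<in> U"
      using U[OF that] mball_base by auto
    ultimately show "openin (gauge_topology a s) U"
      by (simp add: openin_gauge_topology)
  next
    fix U assume "openin (gauge_topology a s) U"
    then have "open U" and U: "a \<in> U \<Longrightarrow> \<exists>e>0. {x. s x < e} \<subseteq> U"
      by (auto simp: openin_gauge_topology)
    have "\<exists>r>0. mball x r \<subseteq> U" if "x \<in> U" for x
    proof (cases "x = a")
      case True
      then show ?thesis using U \<open>x \<in> U\<close> mball_base by auto
    next
      case False
      obtain \<delta> where "\<delta> > 0" "ball x \<delta> \<subseteq> U"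
        using \<open>open U\<close> \<open>x \<in> U\<close> open_contains_ball by blast
      then show ?thesis
        using mball_in_ball[of x \<delta>] s_pos[OF False] by (intro exI[of _ "min \<delta> (s x)"]) auto
    qed
    then show "openin mtopology U" by (simp add: openin_mtopology)
  qed
qed

lemma mcomplete_gauge_dist:
  fixes s :: "'a::complete_space \<Rightarrow> real"
  assumes cont: "continuous_on UNIV s" and s_base: "s a = 0" and s_pos: "\<And>x. x \<noteq> a \<Longrightarrow> 0 < s x"
  shows "Metric_space.mcomplete UNIV (gauge_dist s)"
proof -
  interpret Metric_space UNIV "gauge_dist s"
    using s_base s_pos by (rule Metric_space_gauge_dist)
  have nonneg: "0 \<le> s x" for x
    using s_base s_pos[of x] by (cases "x = a") auto
  have "\<exists>x. limitin mtopology f x sequentially" if "MCauchy f" for f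
  proof (cases "\<forall>e>0. \<forall>N. \<exists>k\<ge>N. s (f k) < e")
    case True
    have "limitin mtopology f a sequentially"
      unfolding limitin_metric eventually_sequentially
    proof (intro conjI allI impI)
      fix e :: real assume "e > 0"
      then obtain N where N: "\<And>m n. N \<le> m \<Longrightarrow> N \<le> n \<Longrightarrow> gauge_dist s (f m) (f n) < e/2"
        using \<open>MCauchy f\<close> unfolding MCauchy_def by (meson half_gt_zero UNIV_I)
      obtain k where "k \<ge> N" "s (f k) < e/2" using True \<open>e > 0\<close> by (meson half_gt_zero)
      have "gauge_dist s (f n) a < e" if "n \<ge> N" for n
        using triangle[of "f n" "f k" a] N[OF that \<open>k \<ge> N\<close>] \<open>s (f k) < e/2\<close>
          gauge_dist_base[of s a, OF s_base nonneg, of "f k"] commute[of a "f k"] by simp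
      then show "\<exists>N. \<forall>n\<ge>N. f n \<in> UNIV \<and> gauge_dist s (f n) a < e" by blast
    qed simp
    then show ?thesis by blast
  next
    case False
    then obtain c N0 where "c > 0" and "\<And>k. k \<ge> N0 \<Longrightarrow> c \<le> s (f k)"
      by (meson not_le)
    with \<open>MCauchy f\<close> have "Cauchy f"
      using nonneg by (intro Cauchy_if_gauge_dist_Cauchy[of s f c N0]) (auto simp: MCauchy_def)
    then obtain L where "f \<longlonglongrightarrow> L" using convergent_eq_Cauchy by blast
    then have "limitin mtopology f L sequentially"
      using cont gauge_dist_tendsto_zero[where s=s and f=f]
      by (auto simp: limitin_metric continuous_on_eq_continuous_at)
    then show ?thesis by blast
  qed
  then show ?thesis unfolding mcomplete_def by blast
qed

lemma completely_metrizable_gauge_topology: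
  fixes s :: "'a::complete_space \<Rightarrow> real"
  assumes "continuous_on UNIV s" "s a = 0" "\<And>x. x \<noteq> a \<Longrightarrow> 0 < s x"
  shows "completely_metrizable_space (gauge_topology a s)"
  unfolding completely_metrizable_space_def
  using Metric_space_gauge_dist[of s a, OF assms(2,3)] mtopology_gauge_dist[OF assms]
    mcomplete_gauge_dist[OF assms] by metis

section \<open>Lifts of scalings of tan (pi x)\<close>

(*
  For 0 < K x, y = tan_lift K x is the solution of tan (pi * y) = K x * tan (pi * x) with
  |y - x| < 1/2, and tan_lift_offset K x = tan (pi * (y - x)).
*)
definition tan_lift_offset :: "(real \<Rightarrow> real) \<Rightarrow> real \<Rightarrow> real" where
  "tan_lift_offset K x = (K x - 1) * sin (pi * x) * cos (pi * x)
                           / ((cos (pi * x))\<^sup>2 + K x * (sin (pi * x))\<^sup>2)"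

definition tan_lift :: "(real \<Rightarrow> real) \<Rightarrow> real \<Rightarrow> real" where
  "tan_lift K x = x + arctan (tan_lift_offset K x) / pi"

lemma cos_square_add_sin_square_pos:
  fixes K t :: real
  assumes "0 < K"
  shows "0 < (cos t)\<^sup>2 + K * (sin t)\<^sup>2"
proof (cases "cos t = 0")
  case True
  then have "(sin t)\<^sup>2 = 1" using sin_cos_squared_add[of t] by simp
  then show ?thesis using True assms by simp
next
  case False
  then show ?thesis using assms by (simp add: add_pos_nonneg)
qed

lemma one_add_tan_lift_offset_square:
  assumes "0 < K x"
  shows "1 + (tan_lift_offset K x)\<^sup>2
           = ((cos (pi * x))\<^sup>2 + (K x)\<^sup>2 * (sin (pi * x))\<^sup>2)
             / ((cos (pi * x))\<^sup>2 + K x * (sin (pi * x))\<^sup>2)\<^sup>2"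
proof -
  define s co where "s = sin (pi * x)" and "co = cos (pi * x)"
  have "0 < co\<^sup>2 + K x * s\<^sup>2"
    unfolding s_def co_def by (rule cos_square_add_sin_square_pos[OF assms])
  moreover have "(co\<^sup>2 + K x * s\<^sup>2)\<^sup>2 + ((K x - 1) * s * co)\<^sup>2 = (co\<^sup>2 + (K x)\<^sup>2 * s\<^sup>2) * (s\<^sup>2 + co\<^sup>2)"
    by algebra
  ultimately show ?thesis
    unfolding tan_lift_offset_def s_def co_def by (simp add: field_simps)
qed

lemma has_real_derivative_tan_lift:
  assumes K: "(K has_real_derivative K') (at x)" and pos: "0 < K x"
  shows "(tan_lift K has_real_derivative
           (K' * sin (pi * x) * cos (pi * x) + pi * K x)
           / (pi * ((cos (pi * x))\<^sup>2 + (K x)\<^sup>2 * (sin (pi * x))\<^sup>2))) (at x)"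
proof -
  define s co where "s = sin (pi * x)" and "co = cos (pi * x)"
  define N D where "N = (K x - 1) * s * co" and "D = co\<^sup>2 + K x * s\<^sup>2"
  define N' D' where "N' = K' * s * co + (K x - 1) * pi * (co\<^sup>2 - s\<^sup>2)"
    and "D' = K' * s\<^sup>2 + 2 * pi * (K x - 1) * s * co"
  define E where "E = co\<^sup>2 + (K x)\<^sup>2 * s\<^sup>2"
  have sc: "s\<^sup>2 + co\<^sup>2 = 1" unfolding s_def co_def by simp
  have "0 < D" unfolding D_def s_def co_def by (rule cos_square_add_sin_square_pos[OF pos])
  have "0 < E" unfolding E_def s_def co_def using pos by (intro cos_square_add_sin_square_pos) simp
  have dN: "((\<lambda>x. (K x - 1) * sin (pi * x) * cos (pi * x)) has_real_derivative N') (at x)"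
    unfolding N'_def s_def co_def
    by (rule derivative_eq_intros K refl | simp add: algebra_simps power2_eq_square)+
  have dD: "((\<lambda>x. (cos (pi * x))\<^sup>2 + K x * (sin (pi * x))\<^sup>2) has_real_derivative D') (at x)"
    unfolding D'_def s_def co_def
    by (rule derivative_eq_intros K refl | simp add: algebra_simps power2_eq_square)+
  have "(tan_lift_offset K has_real_derivative (N' * D - N * D') / D\<^sup>2) (at x)"
    using DERIV_divide[OF dN dD] \<open>0 < D\<close>
    unfolding tan_lift_offset_def[abs_def] N_def D_def s_def co_def by (simp add: power2_eq_square)
  from DERIV_add[OF DERIV_ident DERIV_cdivide[OF DERIV_chain2[OF DERIV_arctan this], of pi]]
  have deriv: "(tan_lift K has_real_derivative
          1 + inverse (1 + (tan_lift_offset K x)\<^sup>2) * ((N' * D - N * D') / D\<^sup>2) / pi) (at x)"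
    unfolding tan_lift_def[abs_def] by simp
  have "N' * D - N * D' = (K' * s * co + (K x - 1) * pi * (co\<^sup>2 - K x * s\<^sup>2)) * (s\<^sup>2 + co\<^sup>2)"
    unfolding N_def D_def N'_def D'_def by algebra
  then have "N' * D - N * D' = K' * s * co + pi * K x - pi * E"
    using sc unfolding E_def by algebra
  moreover have "1 + (tan_lift_offset K x)\<^sup>2 = E / D\<^sup>2"
    using one_add_tan_lift_offset_square[of K x, OF pos] unfolding E_def D_def s_def co_def .
  ultimately have "1 + inverse (1 + (tan_lift_offset K x)\<^sup>2) * ((N' * D - N * D') / D\<^sup>2) / pi
      = (K' * s * co + pi * K x) / (pi * E)"
    using \<open>0 < D\<close> \<open>0 < E\<close> by (simp add: field_simps)
  then show ?thesis
    using deriv unfolding E_def s_def co_def by (simp only:)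
qed

lemma tan_lift_eq_self: "sin (pi * x) * cos (pi * x) = 0 \<Longrightarrow> tan_lift K x = x"
  unfolding tan_lift_def tan_lift_offset_def by simp

lemma tan_lift_fixed_points:
  "tan_lift K 0 = 0" "tan_lift K (1/2) = 1/2" "tan_lift K (- (1/2)) = - (1/2)"
  by (simp_all add: tan_lift_eq_self)

lemma abs_tan_lift_minus_less: "\<bar>tan_lift K x - x\<bar> < 1/2"
proof -
  have "\<bar>arctan y\<bar> / pi < (pi/2) / pi" for y
    using arctan_bounded[of y] by (intro divide_strict_right_mono) auto
  then show ?thesis unfolding tan_lift_def by (simp add: abs_divide)
qed

lemma sin_tan_lift:
  assumes "0 < K x"
  shows "sin (pi * tan_lift K x)
           = K x * sin (pi * x) / sqrt ((cos (pi * x))\<^sup>2 + (K x)\<^sup>2 * (sin (pi * x))\<^sup>2)"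
proof -
  define s co where "s = sin (pi * x)" and "co = cos (pi * x)"
  define R D where "R = tan_lift_offset K x" and "D = co\<^sup>2 + K x * s\<^sup>2"
  have "0 < D" unfolding D_def s_def co_def by (rule cos_square_add_sin_square_pos[OF assms])
  have sqrt_eq: "sqrt (1 + R\<^sup>2) = sqrt (co\<^sup>2 + (K x)\<^sup>2 * s\<^sup>2) / D"
    using one_add_tan_lift_offset_square[of K x, OF assms] \<open>0 < D\<close>
    unfolding R_def D_def s_def co_def by (simp add: real_sqrt_divide)
  have "s * D + co * ((K x - 1) * s * co) = K x * s * (s\<^sup>2 + co\<^sup>2)" unfolding D_def by algebra
  then have num: "s + co * R = K x * s / D"
    using \<open>0 < D\<close> unfolding R_def tan_lift_offset_def D_def s_def co_def by (simp add: field_simps)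
  have "sin (pi * tan_lift K x) = sin (pi * x + arctan R)"
    unfolding tan_lift_def R_def by (simp add: distrib_left)
  also have "\<dots> = (s + co * R) / sqrt (1 + R\<^sup>2)"
    unfolding sin_add cos_arctan sin_arctan s_def co_def by (simp add: add_divide_distrib)
  finally show ?thesis
    unfolding num sqrt_eq using \<open>0 < D\<close> by (simp add: s_def co_def)
qed

lemma abs_sin_tan_lift:
  assumes "0 < K x" "cos (pi * x) \<noteq> 0"
  shows "\<bar>sin (pi * tan_lift K x)\<bar> = \<bar>K x * tan (pi * x)\<bar> / sqrt (1 + (K x * tan (pi * x))\<^sup>2)"
proof -
  define s co where "s = sin (pi * x)" and "co = cos (pi * x)"
  have "1 + (K x * (s / co))\<^sup>2 = (co\<^sup>2 + (K x)\<^sup>2 * s\<^sup>2) / co\<^sup>2"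
    using assms(2) by (simp add: co_def field_simps)
  then have "sqrt (1 + (K x * (s / co))\<^sup>2) = sqrt (co\<^sup>2 + (K x)\<^sup>2 * s\<^sup>2) / \<bar>co\<bar>"
    by (simp add: real_sqrt_divide)
  then show ?thesis
    using assms sin_tan_lift[of K x, OF assms(1)]
    by (simp add: tan_def s_def co_def abs_mult abs_divide)
qed

lemma divide_sqrt_one_add_square_mono:
  fixes u v :: real
  assumes "u \<le> v"
  shows "u / sqrt (1 + u\<^sup>2) \<le> v / sqrt (1 + v\<^sup>2)"
  unfolding sin_arctan[symmetric]
  using arctan_bounded[of u] arctan_bounded[of v] arctan_monotone'[OF assms]
  by (intro sin_monotone_2pi_le) auto

lemma divide_sqrt_one_add_square_le: "0 \<le> u \<Longrightarrow> u / sqrt (1 + u\<^sup>2) \<le> u"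
  by (simp add: divide_le_eq add_pos_nonneg mult_le_cancel_left1)

lemma half_le_divide_sqrt_one_add_square:
  assumes "1 \<le> u"
  shows "1/2 \<le> u / sqrt (1 + u\<^sup>2)"
proof -
  have "1/2 \<le> 1 / sqrt (1 + 1\<^sup>2)"
    using real_sqrt_le_mono[of 2 4] by (simp add: field_simps)
  also have "\<dots> \<le> u / sqrt (1 + u\<^sup>2)"
    using assms by (rule divide_sqrt_one_add_square_mono)
  finally show ?thesis .
qed

lemma abs_sin_tan_lift_arctan:
  assumes "0 < K x" "0 < t" "x = 2 * real n + arctan t / pi"
  shows "\<bar>sin (pi * tan_lift K x)\<bar> = K x * t / sqrt (1 + (K x * t)\<^sup>2)"
proof -
  have px: "pi * x = arctan t + real (2 * n) * pi"
    using assms(3) by (simp add: field_simps)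
  have "cos (pi * x) \<noteq> 0"
    unfolding px cos_add cos_npi sin_npi by simp
  moreover have "tan (pi * x) = t"
    unfolding px tan_periodic_nat by (simp add: tan_arctan)
  ultimately show ?thesis
    using abs_sin_tan_lift[of K x] assms(1,2) by simp
qed

lemma abs_sin_tan_lift_mono:
  assumes "0 < K1 x" "K1 x \<le> K2 x"
  shows "\<bar>sin (pi * tan_lift K1 x)\<bar> \<le> \<bar>sin (pi * tan_lift K2 x)\<bar>"
proof (cases "cos (pi * x) = 0")
  case True
  then show ?thesis by (simp add: tan_lift_eq_self)
next
  case False
  have "\<bar>K1 x * tan (pi * x)\<bar> \<le> \<bar>K2 x * tan (pi * x)\<bar>"
    using assms by (simp add: abs_mult mult_right_mono)
  then have "\<bar>K1 x * tan (pi * x)\<bar> / sqrt (1 + \<bar>K1 x * tan (pi * x)\<bar>\<^sup>2)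
      \<le> \<bar>K2 x * tan (pi * x)\<bar> / sqrt (1 + \<bar>K2 x * tan (pi * x)\<bar>\<^sup>2)"
    by (rule divide_sqrt_one_add_square_mono)
  moreover have "0 < K2 x" using assms by linarith
  ultimately show ?thesis
    using assms(1) False by (simp add: abs_sin_tan_lift)
qed

context
  fixes K K' :: "real \<Rightarrow> real"
  assumes K_deriv: "\<And>x. (K has_real_derivative K' x) (at x)"
    and K_pos: "\<And>x. 0 < K x"
    and K'_bound: "\<And>x. \<bar>K' x\<bar> < 2 * pi * K x"
begin

(* The bound on K' keeps the derivative positive because |sin t * cos t| <= 1/2. *)

lemma tan_lift_deriv_pos: "\<exists>y. (tan_lift K has_real_derivative y) (at x) \<and> 0 < y"
proof -
  define s co where "s = sin (pi * x)" and "co = cos (pi * x)"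
  have "\<bar>s * co\<bar> \<le> 1/2"
    using abs_sin_le_one[of "2 * (pi * x)"] unfolding s_def co_def sin_double by (simp add: abs_mult)
  then have "\<bar>K' x * s * co\<bar> \<le> \<bar>K' x\<bar> / 2"
    by (simp add: abs_mult mult.assoc mult_left_le)
  then have "0 < K' x * s * co + pi * K x" using K'_bound[of x] by linarith
  moreover have "0 < co\<^sup>2 + (K x)\<^sup>2 * s\<^sup>2"
    unfolding s_def co_def using K_pos[of x] by (intro cos_square_add_sin_square_pos) simp
  ultimately show ?thesis
    using has_real_derivative_tan_lift[OF K_deriv K_pos] unfolding s_def co_def
    by (intro exI conjI) (assumption, simp)
qed

lemma strict_mono_tan_lift: "strict_mono (tan_lift K)"
  using DERIV_pos_imp_increasing tan_lift_deriv_pos by (metis strict_monoI)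

lemma continuous_on_tan_lift: "continuous_on UNIV (tan_lift K)"
  using DERIV_isCont tan_lift_deriv_pos by (meson continuous_at_imp_continuous_on)

lemma surj_tan_lift: "surj (tan_lift K)"
proof -
  have "y \<in> range (tan_lift K)" for y
  proof -
    have "tan_lift K (y - 1) \<le> y" "y \<le> tan_lift K (y + 1)"
      using abs_tan_lift_minus_less[of K "y - 1"] abs_tan_lift_minus_less[of K "y + 1"] by linarith+
    then obtain x where "tan_lift K x = y"
      using IVT[of "tan_lift K" "y - 1" y "y + 1"] continuous_on_tan_lift
      by (force simp: continuous_on_eq_continuous_at)
    then show ?thesis by blast
  qed
  then show ?thesis by blast
qed

lemma homeomorphism_tan_lift:
  obtains k where "homeomorphism UNIV UNIV (tan_lift K) k"
  using invariance_of_domain_homeomorphism[OF open_UNIV continuous_on_tan_lift]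
    strict_mono_on_imp_inj_on[OF strict_mono_tan_lift] surj_tan_lift by auto

end

definition tan_scale :: "real \<Rightarrow> real \<Rightarrow> real" where
  "tan_scale c x = exp (c * sqrt (1 + x\<^sup>2))"

lemma tan_scale_pos: "0 < tan_scale c x"
  unfolding tan_scale_def by simp

lemma tan_scale_mono: "c \<le> c' \<Longrightarrow> tan_scale c x \<le> tan_scale c' x"
  unfolding tan_scale_def by (simp add: mult_right_mono)

lemma tan_scale_bounds:
  assumes "0 \<le> c"
  shows "exp (c * \<bar>x\<bar>) \<le> tan_scale c x" "tan_scale c x \<le> exp (c * (1 + \<bar>x\<bar>))"
proof -
  have "\<bar>x\<bar> \<le> sqrt (1 + x\<^sup>2)"
    using real_sqrt_ge_abs1[of x 1] by (simp add: add.commute)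
  moreover have "sqrt (1 + x\<^sup>2) \<le> 1 + \<bar>x\<bar>"
    by (intro real_le_lsqrt) (auto simp: power2_eq_square algebra_simps)
  ultimately show "exp (c * \<bar>x\<bar>) \<le> tan_scale c x" "tan_scale c x \<le> exp (c * (1 + \<bar>x\<bar>))"
    unfolding tan_scale_def using assms by (simp_all add: mult_left_mono)
qed

lemma one_le_tan_scale_mult_exp:
  assumes "0 \<le> c" "m \<le> x"
  shows "1 \<le> tan_scale c x * exp (- (c * m))"
proof -
  have "c * m \<le> c * \<bar>x\<bar>" using assms by (intro mult_left_mono) auto
  then have "1 \<le> exp (c * \<bar>x\<bar>) * exp (- (c * m))" by (simp flip: exp_add)
  also have "\<dots> \<le> tan_scale c x * exp (- (c * m))"
    using tan_scale_bounds(1)[OF assms(1)] by simp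
  finally show ?thesis .
qed

lemma tan_scale_mult_exp_less:
  assumes "0 \<le> c" "\<bar>x\<bar> \<le> m" "c * (1 + m) - d < ln e" "0 < e"
  shows "tan_scale c x * exp (- d) < e"
proof -
  have "c * (1 + \<bar>x\<bar>) \<le> c * (1 + m)" using assms(1,2) by (intro mult_left_mono) auto
  then have "tan_scale c x \<le> exp (c * (1 + m))"
    using tan_scale_bounds(2)[OF assms(1), of x] by (meson exp_le_cancel_iff order_trans)
  then have "tan_scale c x * exp (- d) \<le> exp (c * (1 + m) - d)"
    by (simp add: exp_diff divide_inverse exp_minus)
  also have "\<dots> < e" using assms(3,4) by (metis exp_less_cancel_iff exp_ln)
  finally show ?thesis .
qed

lemma has_real_derivative_tan_scale:
  "(tan_scale c has_real_derivative c * x / sqrt (1 + x\<^sup>2) * tan_scale c x) (at x)"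
proof -
  have "0 < 1 + x\<^sup>2" by (simp add: add_pos_nonneg)
  then show ?thesis
    unfolding tan_scale_def[abs_def]
    by (auto intro!: derivative_eq_intros simp: field_simps)
qed

lemma abs_tan_scale_deriv_less:
  assumes "\<bar>c\<bar> < 2 * pi"
  shows "\<bar>c * x / sqrt (1 + x\<^sup>2) * tan_scale c x\<bar> < 2 * pi * tan_scale c x"
proof -
  have "0 < sqrt (1 + x\<^sup>2)" by (simp add: add_pos_nonneg)
  then have "\<bar>x\<bar> / sqrt (1 + x\<^sup>2) \<le> 1"
    using real_sqrt_ge_abs1[of x 1] by (simp add: add.commute)
  then have "\<bar>c\<bar> * (\<bar>x\<bar> / sqrt (1 + x\<^sup>2)) \<le> \<bar>c\<bar>"
    by (rule mult_left_le) simp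
  then have "\<bar>c * x / sqrt (1 + x\<^sup>2)\<bar> \<le> \<bar>c\<bar>"
    by (simp add: abs_mult abs_divide)
  also have "\<dots> < 2 * pi" by (fact assms)
  finally have "\<bar>c * x / sqrt (1 + x\<^sup>2)\<bar> * tan_scale c x < 2 * pi * tan_scale c x"
    using tan_scale_pos by (rule mult_strict_right_mono)
  then show ?thesis by (simp add: abs_mult abs_of_pos[OF tan_scale_pos])
qed

lemma strict_mono_tan_lift_tan_scale:
  "\<bar>c\<bar> < 2 * pi \<Longrightarrow> strict_mono (tan_lift (tan_scale c))"
  by (rule strict_mono_tan_lift[OF has_real_derivative_tan_scale tan_scale_pos
        abs_tan_scale_deriv_less])

lemma homeomorphism_tan_lift_tan_scale:
  assumes "\<bar>c\<bar> < 2 * pi"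
  obtains k where "homeomorphism UNIV UNIV (tan_lift (tan_scale c)) k"
  using homeomorphism_tan_lift[OF has_real_derivative_tan_scale tan_scale_pos
      abs_tan_scale_deriv_less[OF assms]] .

(* {y. int_gauge y < e} is a neighbourhood of 0 plus intervals of width about e around the
   integers beyond 1/e. *)
definition int_gauge :: "real \<Rightarrow> real" where
  "int_gauge y = max \<bar>sin (pi * y)\<bar> (min \<bar>y\<bar> (1 / (1 + \<bar>y\<bar>)))"

lemma continuous_on_int_gauge: "continuous_on UNIV int_gauge"
  unfolding int_gauge_def by (intro continuous_intros) (auto simp: add_pos_nonneg)

lemma int_gauge_0: "int_gauge 0 = 0"
  unfolding int_gauge_def by simp

lemma int_gauge_pos: "y \<noteq> 0 \<Longrightarrow> 0 < int_gauge y"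
  unfolding int_gauge_def by (simp add: add_pos_nonneg less_max_iff_disj)

lemma abs_le_if_abs_sin_pi_le:
  fixes a b :: real
  assumes "\<bar>a\<bar> \<le> 1/2" "\<bar>b\<bar> \<le> 1/2" "\<bar>sin (pi * a)\<bar> \<le> \<bar>sin (pi * b)\<bar>"
  shows "\<bar>a\<bar> \<le> \<bar>b\<bar>"
proof -
  have abs_sin: "\<bar>sin (pi * y)\<bar> = sin (pi * \<bar>y\<bar>)" if "\<bar>y\<bar> \<le> 1/2" for y :: real
  proof -
    have "0 \<le> sin (pi * \<bar>y\<bar>)" using that by (intro sin_ge_zero) auto
    moreover have "\<bar>sin (pi * y)\<bar> = \<bar>sin (pi * \<bar>y\<bar>)\<bar>" by (cases "0 \<le> y") auto
    ultimately show ?thesis by simp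
  qed
  have "sin (pi * \<bar>a\<bar>) \<le> sin (pi * \<bar>b\<bar>)" using assms abs_sin by simp
  then have "pi * \<bar>a\<bar> \<le> pi * \<bar>b\<bar>"
    using assms(1,2) by (subst (asm) sin_mono_le_eq) (auto intro: order.trans[of _ 0])
  then show ?thesis by simp
qed

lemma abs_tan_lift_less_half_iff:
  assumes "strict_mono (tan_lift K)"
  shows "\<bar>tan_lift K x\<bar> < 1/2 \<longleftrightarrow> \<bar>x\<bar> < 1/2"
proof -
  have "tan_lift K x < 1/2 \<longleftrightarrow> x < 1/2"
    using strict_mono_less[OF assms, of x "1/2"] by (simp add: tan_lift_fixed_points)
  moreover have "- (1/2) < tan_lift K x \<longleftrightarrow> - (1/2) < x"
    using strict_mono_less[OF assms, of "- (1/2)" x] by (simp add: tan_lift_fixed_points)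
  ultimately show ?thesis
    unfolding abs_less_iff minus_less_iff[of "tan_lift K x"] minus_less_iff[of x] by blast
qed

lemma int_gauge_tan_lift_sublevel:
  assumes pos: "\<And>x. 0 < K1 x" and le: "\<And>x. K1 x \<le> K2 x"
    and mono1: "strict_mono (tan_lift K1)" and mono2: "strict_mono (tan_lift K2)" and "0 < e"
  shows "\<exists>e'>0. \<forall>x. int_gauge (tan_lift K2 x) < e' \<longrightarrow> int_gauge (tan_lift K1 x) < e"
proof (intro exI[of _ "min (e/2) (1/4)"] conjI allI impI)
  show "0 < min (e/2) (1/4)" using \<open>0 < e\<close> by simp
  fix x
  define a b where "a = tan_lift K1 x" and "b = tan_lift K2 x"
  assume "int_gauge (tan_lift K2 x) < min (e/2) (1/4)"
  then have sin_b: "\<bar>sin (pi * b)\<bar> < min (e/2) (1/4)"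
    and min_b: "min \<bar>b\<bar> (1 / (1 + \<bar>b\<bar>)) < min (e/2) (1/4)"
    unfolding int_gauge_def b_def by (simp_all only: max_less_iff_conj)
  have sin_a: "\<bar>sin (pi * a)\<bar> \<le> \<bar>sin (pi * b)\<bar>"
    unfolding a_def b_def using pos le by (rule abs_sin_tan_lift_mono)
  have "min \<bar>a\<bar> (1 / (1 + \<bar>a\<bar>)) < e"
  proof (cases "\<bar>b\<bar> < min (e/2) (1/4)")
    case True
    then have "\<bar>b\<bar> < 1/2" by simp
    then have "\<bar>x\<bar> < 1/2"
      using abs_tan_lift_less_half_iff[OF mono2] unfolding b_def by simp
    then have "\<bar>a\<bar> < 1/2"
      using abs_tan_lift_less_half_iff[OF mono1] unfolding a_def by simp
    then have "\<bar>a\<bar> \<le> \<bar>b\<bar>" using abs_le_if_abs_sin_pi_le sin_a \<open>\<bar>b\<bar> < 1/2\<close> by simp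
    moreover have "\<bar>b\<bar> < e/2" using True by simp
    ultimately have "\<bar>a\<bar> < e" using abs_ge_zero[of b] by linarith
    then show ?thesis by (simp add: min_less_iff_disj)
  next
    case False
    then have small_b: "1 / (1 + \<bar>b\<bar>) < min (e/2) (1/4)" using min_b by (metis min_less_iff_disj)
    then have "3 < \<bar>b\<bar>" by (simp add: field_simps)
    moreover have "\<bar>a - b\<bar> < 1"
      using abs_tan_lift_minus_less[of K1 x] abs_tan_lift_minus_less[of K2 x]
      unfolding a_def b_def by linarith
    ultimately have "1 + \<bar>b\<bar> \<le> 2 * (1 + \<bar>a\<bar>)"
      using abs_triangle_ineq2[of b a] abs_minus_commute[of a b] by (smt (verit))
    then have "1 / (1 + \<bar>a\<bar>) \<le> 2 / (1 + \<bar>b\<bar>)"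
      by (simp add: field_simps add_pos_nonneg)
    then show ?thesis using small_b by (simp add: min_less_iff_disj)
  qed
  then show "int_gauge (tan_lift K1 x) < e"
    using sin_a sin_b unfolding int_gauge_def a_def[symmetric] by auto
qed

(* At x = 2 n + arctan t / pi we have tan (pi * x) = t = exp (- 2 c' n): the scale for c' lifts
   tan (pi * tan_lift _ x) to at least 1, the one for c keeps it below e. *)
lemma int_gauge_tan_lift_separation:
  assumes "0 \<le> c" "c < c'" "0 < e"
  shows "\<exists>x. int_gauge (tan_lift (tan_scale c) x) < e \<and> 1/2 \<le> int_gauge (tan_lift (tan_scale c') x)"
proof -
  obtain n :: nat where n: "(2 * c - ln e) / (2 * (c' - c)) < n" "1 / e < n" "1 \<le> n"
    using reals_Archimedean2[of "max (max ((2 * c - ln e) / (2 * (c' - c))) (1 / e)) 1"] by auto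
  define t where "t = exp (- (c' * (2 * real n)))"
  define x where "x = 2 * real n + arctan t / pi"
  have "0 < t" unfolding t_def by simp
  have "arctan t < pi" using arctan_ubound[of t] pi_gt_zero by linarith
  then have x_bounds: "2 * real n \<le> x" "x \<le> 2 * real n + 1"
    unfolding x_def using \<open>0 < t\<close> by simp_all
  have abs_sin: "\<bar>sin (pi * tan_lift (tan_scale d) x)\<bar>
      = tan_scale d x * t / sqrt (1 + (tan_scale d x * t)\<^sup>2)" for d
    using abs_sin_tan_lift_arctan[OF tan_scale_pos \<open>0 < t\<close> x_def] .
  have "1 \<le> tan_scale c' x * t"
    unfolding t_def using x_bounds assms by (intro one_le_tan_scale_mult_exp) auto
  then have "1/2 \<le> int_gauge (tan_lift (tan_scale c') x)"
    using half_le_divide_sqrt_one_add_square unfolding int_gauge_def abs_sin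
    by (meson max.coboundedI1 order.trans)
  have "c * (1 + (2 * real n + 1)) - c' * (2 * real n) < ln e"
    using n(1) assms by (simp add: divide_less_eq algebra_simps)
  then have "tan_scale c x * t < e"
    unfolding t_def using x_bounds assms by (intro tan_scale_mult_exp_less) auto
  moreover have "0 \<le> tan_scale c x * t" using tan_scale_pos[of c x] \<open>0 < t\<close> by simp
  ultimately have "\<bar>sin (pi * tan_lift (tan_scale c) x)\<bar> < e"
    unfolding abs_sin using divide_sqrt_one_add_square_le by (meson le_less_trans)
  moreover have "1 / (1 + \<bar>tan_lift (tan_scale c) x\<bar>) < e"
  proof -
    have "n < 1 + \<bar>tan_lift (tan_scale c) x\<bar>"
      using abs_tan_lift_minus_less[of "tan_scale c" x] x_bounds n(3) by linarith
    then have "1 / (1 + \<bar>tan_lift (tan_scale c) x\<bar>) < 1 / n"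
      using n(3) by (intro divide_strict_left_mono) auto
    also have "1 / n < e" using n(2,3) assms(3) by (simp add: divide_less_eq mult.commute)
    finally show ?thesis .
  qed
  ultimately have "int_gauge (tan_lift (tan_scale c) x) < e"
    unfolding int_gauge_def by (simp add: min_less_iff_disj)
  with \<open>1/2 \<le> int_gauge (tan_lift (tan_scale c') x)\<close> show ?thesis by blast
qed

definition lift_topology :: "(real \<Rightarrow> real) \<Rightarrow> real topology" where
  "lift_topology K = gauge_topology 0 (int_gauge \<circ> tan_lift K)"

lemma lift_topology_homeomorphic:
  "homeomorphism UNIV UNIV (tan_lift K) k \<Longrightarrow>
     lift_topology K homeomorphic_space gauge_topology 0 int_gauge"
  unfolding lift_topology_def
  by (rule homeomorphic_space_gauge_topology) (simp_all add: tan_lift_fixed_points)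

lemma completely_metrizable_int_gauge_topology:
  "completely_metrizable_space (gauge_topology 0 int_gauge)"
  using continuous_on_int_gauge int_gauge_0 int_gauge_pos
  by (rule completely_metrizable_gauge_topology)

lemma coarser_lift_topology_tan_scale:
  assumes "0 \<le> c" "c \<le> c'" "c' < 2 * pi"
  shows "coarser (lift_topology (tan_scale c)) (lift_topology (tan_scale c'))"
  unfolding lift_topology_def
  using int_gauge_tan_lift_sublevel[OF tan_scale_pos tan_scale_mono[OF assms(2)]
      strict_mono_tan_lift_tan_scale strict_mono_tan_lift_tan_scale] assms
  by (intro coarser_gauge_topology) auto

lemma not_coarser_lift_topology_tan_scale:
  assumes "0 \<le> c" "c < c'" "c' < 2 * pi"
  shows "\<not> coarser (lift_topology (tan_scale c')) (lift_topology (tan_scale c))"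
  unfolding lift_topology_def
proof (rule not_coarser_gauge_topology)
  have "\<bar>c'\<bar> < 2 * pi" using assms by simp
  then obtain k where "homeomorphism UNIV UNIV (tan_lift (tan_scale c')) k"
    by (rule homeomorphism_tan_lift_tan_scale)
  then show "continuous_on UNIV (int_gauge \<circ> tan_lift (tan_scale c'))"
    using continuous_on_int_gauge
    by (metis continuous_on_compose continuous_on_subset homeomorphism_def top_greatest)
  show "(int_gauge \<circ> tan_lift (tan_scale c')) 0 = 0"
    by (simp add: tan_lift_fixed_points int_gauge_0)
  show "\<exists>x. (int_gauge \<circ> tan_lift (tan_scale c)) x < e'
            \<and> 1/2 \<le> (int_gauge \<circ> tan_lift (tan_scale c')) x" if "0 < e'" for e'
    using int_gauge_tan_lift_separation[OF assms(1,2) that] by simp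
qed simp

definition chain_topology :: "real \<Rightarrow> real topology" where
  "chain_topology t = lift_topology (tan_scale (arctan t + pi / 2))"

lemma chain_topology_scale_bounds: "0 < arctan t + pi / 2" "arctan t + pi / 2 < pi"
  using arctan_bounded[of t] by auto

lemma chain_topology_homeomorphic:
  "chain_topology t homeomorphic_space gauge_topology 0 int_gauge"
proof -
  have "\<bar>arctan t + pi / 2\<bar> < 2 * pi"
    using chain_topology_scale_bounds[of t] by simp
  then obtain k where "homeomorphism UNIV UNIV (tan_lift (tan_scale (arctan t + pi / 2))) k"
    by (rule homeomorphism_tan_lift_tan_scale)
  then show ?thesis unfolding chain_topology_def by (rule lift_topology_homeomorphic)
qed

lemma completely_metrizable_chain_topology: "completely_metrizable_space (chain_topology t)"
  using homeomorphic_completely_metrizable_space[OF chain_topology_homeomorphic]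
    completely_metrizable_int_gauge_topology by blast

lemma chain_topology_in_L_family: "chain_topology t \<in> L_family"
  using completely_metrizable_chain_topology[of t]
    completely_metrizable_imp_metrizable_space metrizable_imp_Hausdorff_space
  by (auto simp: L_family_def chain_topology_def lift_topology_def
      coarser_gauge_topology_euclidean)

lemma coarser_chain_topology: "t \<le> t' \<Longrightarrow> coarser (chain_topology t) (chain_topology t')"
  unfolding chain_topology_def
  using chain_topology_scale_bounds[of t] chain_topology_scale_bounds[of t'] arctan_monotone'
  by (intro coarser_lift_topology_tan_scale) auto

lemma inj_chain_topology: "inj chain_topology"
proof (rule injI, rule ccontr)
  have neq: "chain_topology t \<noteq> chain_topology t'" if "t < t'" for t t'
  proof -
    have "\<not> coarser (chain_topology t') (chain_topology t)"
      unfolding chain_topology_def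
      using chain_topology_scale_bounds[of t] chain_topology_scale_bounds[of t'] arctan_monotone[OF that]
      by (intro not_coarser_lift_topology_tan_scale) auto
    then show ?thesis by (auto simp: coarser_def)
  qed
  fix t t' assume "chain_topology t = chain_topology t'" "t \<noteq> t'"
  then show False using neq by (metis linorder_neqE_linordered_idom)
qed

theorem proposition7:
  shows "\<exists>J. J \<subseteq> L_family
    \<and> (\<forall>\<tau>\<in>J. \<forall>\<sigma>\<in>J. coarser \<tau> \<sigma> \<or> coarser \<sigma> \<tau>)
    \<and> J \<approx> (UNIV :: real set)
    \<and> (\<forall>\<tau>\<in>J. completely_metrizable_space \<tau>)
    \<and> (\<forall>\<tau>\<in>J. \<forall>\<sigma>\<in>J. \<tau> homeomorphic_space \<sigma>)"
proof (intro exI[of _ "range chain_topology"] conjI)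
  show "range chain_topology \<subseteq> L_family"
    using chain_topology_in_L_family by blast
  show "\<forall>\<tau>\<in>range chain_topology. \<forall>\<sigma>\<in>range chain_topology. coarser \<tau> \<sigma> \<or> coarser \<sigma> \<tau>"
    using coarser_chain_topology by (metis imageE linear)
  show "range chain_topology \<approx> (UNIV :: real set)"
    using inj_on_image_eqpoll_self[OF inj_chain_topology] .
  show "\<forall>\<tau>\<in>range chain_topology. completely_metrizable_space \<tau>"
    using completely_metrizable_chain_topology by blast
  show "\<forall>\<tau>\<in>range chain_topology. \<forall>\<sigma>\<in>range chain_topology. \<tau> homeomorphic_space \<sigma>"
    using chain_topology_homeomorphic homeomorphic_space_sym homeomorphic_space_trans by blast
qed

end
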